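(* Let $\Gamma$ be either $\Gamma_1$ or $\Gamma_2$ (as in the context), with the Laplacian $-d^2/dx^2$ (no potential). Let $\Gamma^A$ (resp. $\Gamma^B$) be the quantum graph obtained from $\Gamma$ by replacing the vertex condition at $A$ (resp. at $B$) by the Dirichlet condition, all other conditions unchanged. Then $\lambda_1(\Gamma^B)<\lambda_1(\Gamma^A)$.
   Context: $\Gamma_1$: two vertices $A,B$ joined by four edges $e_1,\dots,e_4$ of lengths $\ell_1,\dots,\ell_4>0$, with $\delta$-type conditions at $A$ and $B$ with real coupling constants $\gamma_A<\gamma_B$. $\Gamma_2$: $\Gamma_1$ with an additional vertex $C$ and edge $e_0$ of length $\ell_0>0$ joining $C$ to $A$, with Neumann–Kirchhoff conditions at all of $A,B,C$. A $\delta$-type condition with coupling $\gamma_v$ at $v$: $f$ continuous at $v$ and $\sum_{e\ni v}f_e'(v)=\gamma_v f(v)$ (derivatives into the edges); Neumann–Kirchhoff is $\gamma_v=0$; the Dirichlet condition at $v$ is $f_e(v)=0$ for all edges $e$ at $v$ (it decouples the edges at $v$). $\lambda_1(G)$ denotes the smallest eigenvalue of the quantum graph $G$. *)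

theory Defs
  imports "HOL-Analysis.Analysis"
begin

datatype vtx = VA | VB | VC

datatype vcond = Delta real | Dirichlet

text \<open>A compact metric graph: finite set of edge labels, edge lengths, each edge
  e identified with the interval [0, len e], x = 0 at src e, x = len e at tgt e.\<close>
record qgraph =
  edges :: "nat set"
  len   :: "nat \<Rightarrow> real"
  src   :: "nat \<Rightarrow> vtx"
  tgt   :: "nat \<Rightarrow> vtx"
  cond  :: "vtx \<Rightarrow> vcond"

definition vals_at :: "qgraph \<Rightarrow> (nat \<Rightarrow> real \<Rightarrow> real) \<Rightarrow> vtx \<Rightarrow> real \<Rightarrow> bool" where
  "vals_at G f v c \<longleftrightarrow>
     (\<forall>e\<in>edges G. (src G e = v \<longrightarrow> f e 0 = c) \<and> (tgt G e = v \<longrightarrow> f e (len G e) = c))"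

text \<open>Sum of the derivatives at v taken into the edges (g is the derivative of f).\<close>
definition flux_at :: "qgraph \<Rightarrow> (nat \<Rightarrow> real \<Rightarrow> real) \<Rightarrow> vtx \<Rightarrow> real" where
  "flux_at G g v = (\<Sum>e\<in>edges G. (if src G e = v then g e 0 else 0)
                                  + (if tgt G e = v then - g e (len G e) else 0))"

definition vertex_ok :: "qgraph \<Rightarrow> (nat \<Rightarrow> real \<Rightarrow> real) \<Rightarrow> (nat \<Rightarrow> real \<Rightarrow> real) \<Rightarrow> vtx \<Rightarrow> bool" where
  "vertex_ok G f g v = (case cond G v of
       Dirichlet \<Rightarrow> vals_at G f v 0
     | Delta \<gamma> \<Rightarrow> (\<exists>c. vals_at G f v c \<and> flux_at G g v = \<gamma> * c))"

definition is_eigenvalue :: "qgraph \<Rightarrow> real \<Rightarrow> bool" where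
  "is_eigenvalue G lam \<longleftrightarrow> (\<exists>f g.
     (\<forall>e\<in>edges G. \<forall>x\<in>{0..len G e}.
        (f e has_real_derivative g e x) (at x within {0..len G e}) \<and>
        (g e has_real_derivative (- lam * f e x)) (at x within {0..len G e})) \<and>
     (\<exists>e\<in>edges G. \<exists>x\<in>{0..len G e}. f e x \<noteq> 0) \<and>
     (\<forall>v. vertex_ok G f g v))"

definition lambda1 :: "qgraph \<Rightarrow> real" where
  "lambda1 G = Inf {lam. is_eigenvalue G lam}"

definition dirichlet_at :: "vtx \<Rightarrow> qgraph \<Rightarrow> qgraph" where
  "dirichlet_at v G = G\<lparr>cond := (cond G)(v := Dirichlet)\<rparr>"

definition Gamma1 :: "(nat \<Rightarrow> real) \<Rightarrow> real \<Rightarrow> real \<Rightarrow> qgraph" where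
  "Gamma1 l gA gB = \<lparr>edges = {1..4}, len = l, src = (\<lambda>e. VA), tgt = (\<lambda>e. VB),
     cond = (\<lambda>v. case v of VA \<Rightarrow> Delta gA | VB \<Rightarrow> Delta gB | VC \<Rightarrow> Delta 0)\<rparr>"

text \<open>Gamma_2: Gamma_1 plus edge 0 from C to A; Neumann-Kirchhoff everywhere.\<close>
definition Gamma2 :: "(nat \<Rightarrow> real) \<Rightarrow> qgraph" where
  "Gamma2 l = \<lparr>edges = {0..4}, len = l,
     src = (\<lambda>e. if e = 0 then VC else VA), tgt = (\<lambda>e. if e = 0 then VA else VB),
     cond = (\<lambda>v. Delta 0)\<rparr>"

end

theory Submission
  imports Defs
begin

text \<open>Below the lowest Dirichlet eigenvalue of the four parallel edges, an eigenfunction vanishing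
  at one of \<open>A, B\<close> is determined on every edge by its common value \<open>c\<close> at the other vertex,
  and the vertex condition there becomes \<open>F lam * c = gamma * c\<close>, where \<open>F\<close> sums the
  Dirichlet-to-Neumann coefficients of the edges. A Wronskian (Sturm comparison) argument shows
  that \<open>F\<close> increases strictly, and it runs through all reals; so the first eigenvalues of
  \<open>Gamma\<^sub>1\<^sup>B\<close> and \<open>Gamma\<^sub>1\<^sup>A\<close> are the roots of \<open>F = gamma\<^sub>A\<close> and
  \<open>F = gamma\<^sub>B\<close>, ordered like \<open>gamma\<^sub>A < gamma\<^sub>B\<close>. In \<open>Gamma\<^sub>2\<^sup>B\<close> the pendant
  edge adds its own increasing Neumann coefficient \<open>p\<close>, positive for \<open>lam > 0\<close>, at \<open>A\<close>,
  so the first eigenvalue, the root of \<open>F + p = 0\<close>, lies below the root of \<open>F = 0\<close>.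
  In \<open>Gamma\<^sub>2\<^sup>A\<close> the pendant edge decouples and carries no eigenfunction below its own
  lowest eigenvalue, so the eigenvalues below that level are roots of \<open>F = 0\<close>.\<close>

section \<open>Elementary real analysis\<close>

lemma divide_less_divide_cross:
  fixes x y z w :: real
  shows "0 < y \<Longrightarrow> 0 < z \<Longrightarrow> x * z < w * y \<Longrightarrow> x / y < w / z"
  by (simp add: field_simps)

lemma power2_div_antimono:
  fixes c x y :: real
  shows "0 < x \<Longrightarrow> x \<le> y \<Longrightarrow> 0 \<le> c \<Longrightarrow> (c / y)\<^sup>2 \<le> (c / x)\<^sup>2"
  by (intro power_mono divide_left_mono) auto

lemma isCont_if_continuous_on_halves:
  fixes f :: "real \<Rightarrow> real"
  assumes "continuous_on {..0} f" "continuous_on {0..} f"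
  shows "isCont f x"
proof -
  have "continuous_on ({..0} \<union> {0..}) f" using assms by (intro continuous_on_closed_Un) auto
  moreover have "{..0} \<union> {0..} = (UNIV :: real set)" by auto
  ultimately show ?thesis by (simp add: continuous_on_eq_continuous_at)
qed

lemma isCont_divide_by_var:
  fixes f :: "real \<Rightarrow> real"
  assumes "(f has_real_derivative D) (at 0)" "f 0 = 0" "\<And>y. isCont f y"
  shows "isCont (\<lambda>x. if x = 0 then D else f x / x) y"
proof (cases "y = 0")
  case True
  have "((\<lambda>x. (f x - f 0) / (x - 0)) \<longlongrightarrow> D) (at 0)"
    using assms(1) has_field_derivative_iff by blast
  then have "((\<lambda>x. if x = 0 then D else f x / x) \<longlongrightarrow> D) (at 0)"
    by (rule Lim_transform_eventually) (simp add: eventually_at_filter assms(2))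
  with True show ?thesis by (simp add: isCont_def)
next
  case False
  then have "eventually (\<lambda>x. x \<noteq> 0) (nhds y)" by (rule t1_space_nhds)
  then have "eventually (\<lambda>x. (if x = 0 then D else f x / x) = f x / x) (nhds y)"
    by eventually_elim simp
  moreover have "isCont (\<lambda>x. f x / x) y" using False assms(3) by (intro continuous_intros)
  ultimately show ?thesis by (rule isCont_cong [THEN iffD2])
qed

lemma exists_quotient_ge_at_left:
  fixes n d :: "real \<Rightarrow> real"
  assumes "b < a" "isCont n a" "isCont d a" "0 < n a" "d a = 0"
    and d_pos: "\<And>x. b < x \<Longrightarrow> x < a \<Longrightarrow> 0 < d x"
  shows "\<exists>x\<in>{b<..<a}. M \<le> n x / d x"
proof -
  have "isCont (\<lambda>x. n x - M * d x) a" using assms(2,3) by (intro continuous_intros)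
  then have "eventually (\<lambda>x. 0 < n x - M * d x) (at a)"
    using assms(4,5) by (intro order_tendstoD(1)) (auto simp: isCont_def)
  then have "eventually (\<lambda>x. 0 < n x - M * d x) (at_left a)"
    by (rule filter_leD [OF at_le [OF subset_UNIV], rotated])
  moreover have "eventually (\<lambda>x. x \<in> {b<..<a}) (at_left a)"
    using assms(1) by (rule eventually_at_left_real)
  ultimately have "eventually (\<lambda>x. 0 < n x - M * d x \<and> x \<in> {b<..<a}) (at_left a)"
    by eventually_elim auto
  then obtain x where x: "0 < n x - M * d x" "x \<in> {b<..<a}"
    using eventually_happens' [OF trivial_limit_at_left_real] by blast
  then have "M \<le> n x / d x" using d_pos by (simp add: pos_le_divide_eq)
  with x show ?thesis by blast
qed

section \<open>Solutions of \<open>- f'' = lam * f\<close> on an interval\<close>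

definition eigen_ode :: "real \<Rightarrow> real \<Rightarrow> (real \<Rightarrow> real) \<Rightarrow> (real \<Rightarrow> real) \<Rightarrow> bool" where
  "eigen_ode L lam f g \<longleftrightarrow> (\<forall>x\<in>{0..L}.
     (f has_real_derivative g x) (at x within {0..L}) \<and>
     (g has_real_derivative - lam * f x) (at x within {0..L}))"

lemma wronskian_has_derivative:
  assumes "eigen_ode L lam u du" "eigen_ode L mu v dv" "x \<in> {0..L}"
  shows "((\<lambda>x. du x * v x - u x * dv x) has_real_derivative (mu - lam) * u x * v x)
           (at x within {0..L})"
proof -
  have "((\<lambda>x. du x * v x - u x * dv x) has_real_derivative
          - lam * u x * v x + du x * dv x - (du x * dv x + u x * (- mu * v x)))
          (at x within {0..L})"
    using assms unfolding eigen_ode_def by (auto intro!: derivative_eq_intros)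
  then show ?thesis by (simp add: algebra_simps)
qed

lemma wronskian_const:
  assumes "eigen_ode L lam u du" "eigen_ode L lam v dv" "x \<in> {0..L}"
  shows "du x * v x - u x * dv x = du 0 * v 0 - u 0 * dv 0"
proof -
  have "((\<lambda>y. du y * v y - u y * dv y) has_real_derivative 0) (at y within {0..L})"
    if "y \<in> {0..L}" for y
    using wronskian_has_derivative [OF assms(1,2) that] by simp
  then obtain c where "\<forall>y\<in>{0..L}. du y * v y - u y * dv y = c"
    using has_field_derivative_zero_constant [OF convex_real_interval(5)] by blast
  with assms(3) show ?thesis by auto
qed

lemma wronskian_strict_mono:
  assumes "eigen_ode L lam u du" "eigen_ode L mu v dv" "lam < mu" "0 < L"
    and pos: "\<And>x. 0 < x \<Longrightarrow> x < L \<Longrightarrow> 0 < u x * v x"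
  shows "du 0 * v 0 - u 0 * dv 0 < du L * v L - u L * dv L"
proof (rule DERIV_pos_imp_increasing_open [OF \<open>0 < L\<close>])
  fix x assume x: "0 < x" "x < L"
  then have "((\<lambda>x. du x * v x - u x * dv x) has_real_derivative (mu - lam) * u x * v x) (at x)"
    using wronskian_has_derivative [OF assms(1,2), of x] by (simp add: at_within_Icc_at)
  moreover have "0 < (mu - lam) * u x * v x"
    using pos [OF x] \<open>lam < mu\<close> by (simp add: mult.assoc)
  ultimately show "\<exists>y. ((\<lambda>x. du x * v x - u x * dv x) has_real_derivative y) (at x) \<and> 0 < y"
    by blast
qed (rule DERIV_continuous_on [OF wronskian_has_derivative [OF assms(1,2)]])

text \<open>The solutions of \<open>- u'' = lam * u\<close> with \<open>u 0 = 1, u' 0 = 0\<close>, resp.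
  \<open>u 0 = 0, u' 0 = 1\<close>.\<close>
definition fund_cos :: "real \<Rightarrow> real \<Rightarrow> real" where
  "fund_cos lam t =
     (if lam > 0 then cos (sqrt lam * t) else if lam < 0 then cosh (sqrt (-lam) * t) else 1)"

definition fund_sin :: "real \<Rightarrow> real \<Rightarrow> real" where
  "fund_sin lam t =
     (if lam > 0 then sin (sqrt lam * t) / sqrt lam
      else if lam < 0 then sinh (sqrt (-lam) * t) / sqrt (-lam) else t)"

lemma fund_cos_0 [simp]: "fund_cos lam 0 = 1"
  by (simp add: fund_cos_def)

lemma fund_sin_0 [simp]: "fund_sin lam 0 = 0"
  by (simp add: fund_sin_def)

lemma fund_sin_has_derivative:
  "(fund_sin lam has_real_derivative fund_cos lam t) (at t within X)"
proof -
  consider "lam > 0" | "lam < 0" | "lam = 0" by linarith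
  then show ?thesis
  proof cases
    case 1
    then have "((\<lambda>t. sin (sqrt lam * t) / sqrt lam) has_real_derivative cos (sqrt lam * t))
        (at t within X)"
      by (auto intro!: derivative_eq_intros simp: mult.assoc)
    with 1 show ?thesis by (simp add: fund_sin_def [abs_def] fund_cos_def)
  next
    case 2
    then have "sqrt (-lam) * sqrt (-lam) = -lam" by simp
    with 2 have "((\<lambda>t. sinh (sqrt (-lam) * t) / sqrt (-lam)) has_real_derivative
        cosh (sqrt (-lam) * t)) (at t within X)"
      by (auto intro!: derivative_eq_intros simp: mult.assoc)
    with 2 show ?thesis by (simp add: fund_sin_def [abs_def] fund_cos_def)
  qed (simp add: fund_sin_def [abs_def] fund_cos_def)
qed

lemma fund_cos_has_derivative:
  "(fund_cos lam has_real_derivative - lam * fund_sin lam t) (at t within X)"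
proof -
  consider "lam > 0" | "lam < 0" | "lam = 0" by linarith
  then show ?thesis
  proof cases
    case 1
    then have "((\<lambda>t. cos (sqrt lam * t)) has_real_derivative
        - lam * (sin (sqrt lam * t) / sqrt lam)) (at t within X)"
      by (auto intro!: derivative_eq_intros simp: field_simps)
    with 1 show ?thesis by (simp add: fund_cos_def [abs_def] fund_sin_def)
  next
    case 2
    have "((\<lambda>t. cosh (sqrt (-lam) * t)) has_real_derivative
        sinh (sqrt (-lam) * t) * sqrt (-lam)) (at t within X)"
      by (auto intro!: derivative_eq_intros)
    moreover have "sqrt (-lam) = -lam / sqrt (-lam)"
      using 2 by (subst real_div_sqrt) auto
    ultimately have "((\<lambda>t. cosh (sqrt (-lam) * t)) has_real_derivative
        - lam * (sinh (sqrt (-lam) * t) / sqrt (-lam))) (at t within X)"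
      by (metis times_divide_eq_left times_divide_eq_right mult.commute)
    with 2 show ?thesis by (simp add: fund_cos_def [abs_def] fund_sin_def)
  qed (simp add: fund_sin_def fund_cos_def [abs_def])
qed

lemma eigen_ode_fund:
  "eigen_ode L lam (\<lambda>x. a * fund_cos lam x + b * fund_sin lam x)
     (\<lambda>x. - lam * a * fund_sin lam x + b * fund_cos lam x)"
  unfolding eigen_ode_def
  by (auto intro!: derivative_eq_intros fund_cos_has_derivative fund_sin_has_derivative
      simp: algebra_simps)

lemma eigen_ode_fund_cos: "eigen_ode L lam (fund_cos lam) (\<lambda>x. - lam * fund_sin lam x)"
  using eigen_ode_fund [of L lam 1 0] by simp

lemma eigen_ode_fund_sin: "eigen_ode L lam (fund_sin lam) (fund_cos lam)"
  using eigen_ode_fund [of L lam 0 1] by simp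

lemma fund_cos_sin_sq: "(fund_cos lam t)\<^sup>2 + lam * (fund_sin lam t)\<^sup>2 = 1"
proof -
  define q where
    "q t = fund_cos lam t * fund_cos lam t + lam * (fund_sin lam t * fund_sin lam t)" for t
  have "(q has_real_derivative 0) (at t within UNIV)" for t
  proof -
    have "(q has_real_derivative
            fund_cos lam t * (- lam * fund_sin lam t) + (- lam * fund_sin lam t) * fund_cos lam t
            + lam * (fund_sin lam t * fund_cos lam t + fund_cos lam t * fund_sin lam t)) (at t)"
      unfolding q_def [abs_def]
      by (intro DERIV_add DERIV_cmult DERIV_mult' fund_cos_has_derivative fund_sin_has_derivative)
    then show ?thesis by (simp add: algebra_simps)
  qed
  then obtain c where "\<forall>t\<in>UNIV. q t = c"
    using has_field_derivative_zero_constant [OF convex_UNIV] by blast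
  then have "q t = q 0" by simp
  then show ?thesis by (simp add: q_def power2_eq_square)
qed

text \<open>The Wronskians of \<open>f\<close> with \<open>fund_sin\<close> and \<open>fund_cos\<close> are constant, and
  \<open>fund_cos_sin_sq\<close> is the determinant that inverts the resulting linear system.\<close>
lemma eigen_ode_solution:
  assumes f: "eigen_ode L lam f g" and x: "x \<in> {0..L}"
  shows "f x = f 0 * fund_cos lam x + g 0 * fund_sin lam x"
    and "g x = - lam * f 0 * fund_sin lam x + g 0 * fund_cos lam x"
proof -
  let ?C = "fund_cos lam x" and ?S = "fund_sin lam x"
  have a: "g x * ?S - f x * ?C = - f 0"
    using wronskian_const [OF f eigen_ode_fund_sin x] by simp
  have b: "g x * ?C + lam * f x * ?S = g 0"
    using wronskian_const [OF f eigen_ode_fund_cos x] by (simp add: algebra_simps)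
  have one: "?C * ?C + lam * (?S * ?S) = 1"
    using fund_cos_sin_sq [of lam x] by (simp add: power2_eq_square)
  have "f x = f x * (?C * ?C + lam * (?S * ?S))" by (simp add: one)
  also have "\<dots> = ?C * (- (g x * ?S - f x * ?C)) + ?S * (g x * ?C + lam * f x * ?S)"
    by (simp add: algebra_simps)
  also have "\<dots> = ?C * f 0 + ?S * g 0" by (simp only: a b minus_minus)
  finally show "f x = f 0 * ?C + g 0 * ?S" by (simp add: algebra_simps)
  have "g x = g x * (?C * ?C + lam * (?S * ?S))" by (simp add: one)
  also have "\<dots> = lam * ?S * (g x * ?S - f x * ?C) + ?C * (g x * ?C + lam * f x * ?S)"
    by (simp add: algebra_simps)
  also have "\<dots> = lam * ?S * (- f 0) + ?C * g 0" by (simp only: a b)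
  finally show "g x = - lam * f 0 * ?S + g 0 * ?C" by (simp add: algebra_simps)
qed

lemma eigen_ode_zero:
  "eigen_ode L lam f g \<Longrightarrow> f 0 = 0 \<Longrightarrow> g 0 = 0 \<Longrightarrow> x \<in> {0..L} \<Longrightarrow> f x = 0"
  using eigen_ode_solution (1) [of L lam f g x] by simp

lemma fund_sin_pos:
  assumes "0 < t" "lam < (pi / t)\<^sup>2"
  shows "0 < fund_sin lam t"
proof (cases "lam > 0")
  case True
  then have "sqrt lam < sqrt ((pi / t)\<^sup>2)" using assms(2) by (intro real_sqrt_less_mono)
  with assms(1) have "sqrt lam * t < pi" by (simp add: less_divide_eq)
  with True assms(1) show ?thesis by (simp add: fund_sin_def sin_gt_zero)
qed (use assms(1) in \<open>auto simp: fund_sin_def\<close>)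

lemma fund_cos_pos:
  assumes "0 < t" "lam < (pi / (2 * t))\<^sup>2"
  shows "0 < fund_cos lam t"
proof (cases "lam > 0")
  case True
  then have "sqrt lam < sqrt ((pi / (2 * t))\<^sup>2)" using assms(2) by (intro real_sqrt_less_mono)
  with assms(1) have "sqrt lam * t < pi / 2" by (simp add: less_divide_eq)
  with True assms(1) show ?thesis by (simp add: fund_cos_def cos_gt_zero)
qed (auto simp: fund_cos_def)

lemma isCont_fund_cos: "isCont (\<lambda>lam. fund_cos lam t) lam"
proof (rule isCont_if_continuous_on_halves)
  have "continuous_on {..0} (\<lambda>lam. cosh (sqrt (- lam) * t))" by (intro continuous_intros)
  then show "continuous_on {..0} (\<lambda>lam. fund_cos lam t)"
    by (rule continuous_on_eq) (auto simp: fund_cos_def)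
  have "continuous_on {0..} (\<lambda>lam. cos (sqrt lam * t))" by (intro continuous_intros)
  then show "continuous_on {0..} (\<lambda>lam. fund_cos lam t)"
    by (rule continuous_on_eq) (auto simp: fund_cos_def)
qed

lemma isCont_fund_sin: "isCont (\<lambda>lam. fund_sin lam t) lam"
proof (rule isCont_if_continuous_on_halves)
  let ?Q = "\<lambda>y. if y = 0 then t else sinh (y * t) / y"
  have "isCont ?Q y" for y
  proof (rule isCont_divide_by_var)
    show "((\<lambda>y. sinh (y * t)) has_real_derivative t) (at 0)" by (auto intro!: derivative_eq_intros)
    show "isCont (\<lambda>y. sinh (y * t)) y" for y by (intro continuous_intros)
  qed simp
  then have "isCont (\<lambda>lam. ?Q (sqrt (- lam))) lam" for lam
    by (rule isCont_o2 [rotated]) (intro continuous_intros)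
  then have "continuous_on {..0} (\<lambda>lam. ?Q (sqrt (- lam)))"
    by (simp add: continuous_at_imp_continuous_on)
  then show "continuous_on {..0} (\<lambda>lam. fund_sin lam t)"
    by (rule continuous_on_eq) (auto simp: fund_sin_def)
next
  let ?Q = "\<lambda>y. if y = 0 then t else sin (y * t) / y"
  have "isCont ?Q y" for y
  proof (rule isCont_divide_by_var)
    show "((\<lambda>y. sin (y * t)) has_real_derivative t) (at 0)" by (auto intro!: derivative_eq_intros)
    show "isCont (\<lambda>y. sin (y * t)) y" for y by (intro continuous_intros)
  qed simp
  then have "isCont (\<lambda>lam. ?Q (sqrt lam)) lam" for lam
    by (rule isCont_o2 [OF isCont_real_sqrt])
  then have "continuous_on {0..} (\<lambda>lam. ?Q (sqrt lam))"
    by (simp add: continuous_at_imp_continuous_on)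
  then show "continuous_on {0..} (\<lambda>lam. fund_sin lam t)"
    by (rule continuous_on_eq) (auto simp: fund_sin_def)
qed

section \<open>Dirichlet-to-Neumann coefficients of an edge\<close>

text \<open>For a solution on \<open>[0, L]\<close> that vanishes, resp. has vanishing derivative, at one end,
  the derivative into the edge at the other end is the coefficient times the value there.\<close>
definition dtn_dirichlet :: "real \<Rightarrow> real \<Rightarrow> real" where
  "dtn_dirichlet L lam = - fund_cos lam L / fund_sin lam L"

definition dtn_neumann :: "real \<Rightarrow> real \<Rightarrow> real" where
  "dtn_neumann L lam = lam * fund_sin lam L / fund_cos lam L"

lemma dtn_dirichlet_0: "dtn_dirichlet L 0 = - 1 / L"
  by (simp add: dtn_dirichlet_def fund_cos_def fund_sin_def)

lemma dtn_neumann_0: "dtn_neumann L 0 = 0"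
  by (simp add: dtn_neumann_def)

lemma dtn_dirichlet_strict_mono:
  assumes "0 < L" "a < b" "b < (pi / L)\<^sup>2"
  shows "dtn_dirichlet L a < dtn_dirichlet L b"
proof -
  have pos: "0 < fund_sin lam x" if "lam \<le> b" "0 < x" "x \<le> L" for lam x
  proof -
    have "(pi / L)\<^sup>2 \<le> (pi / x)\<^sup>2" using that by (intro power2_div_antimono) auto
    with that assms show ?thesis by (intro fund_sin_pos) linarith+
  qed
  have "fund_cos a 0 * fund_sin b 0 - fund_sin a 0 * fund_cos b 0
      < fund_cos a L * fund_sin b L - fund_sin a L * fund_cos b L"
    by (rule wronskian_strict_mono [OF eigen_ode_fund_sin eigen_ode_fund_sin]) (use pos assms in auto)
  then have "- fund_cos a L * fund_sin b L < - fund_cos b L * fund_sin a L"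
    by (simp add: algebra_simps)
  with pos [of a L] pos [of b L] assms show ?thesis
    unfolding dtn_dirichlet_def by (intro divide_less_divide_cross) auto
qed

lemma dtn_neumann_strict_mono:
  assumes "0 < L" "a < b" "b < (pi / (2 * L))\<^sup>2"
  shows "dtn_neumann L a < dtn_neumann L b"
proof -
  have pos: "0 < fund_cos lam x" if "lam \<le> b" "0 < x" "x \<le> L" for lam x
  proof -
    have "(pi / (2 * L))\<^sup>2 \<le> (pi / (2 * x))\<^sup>2" using that by (intro power2_div_antimono) auto
    with that assms show ?thesis by (intro fund_cos_pos) linarith+
  qed
  have "- a * fund_sin a 0 * fund_cos b 0 - fund_cos a 0 * (- b * fund_sin b 0)
      < - a * fund_sin a L * fund_cos b L - fund_cos a L * (- b * fund_sin b L)"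
    by (rule wronskian_strict_mono [OF eigen_ode_fund_cos eigen_ode_fund_cos]) (use pos assms in auto)
  then have "a * fund_sin a L * fund_cos b L < b * fund_sin b L * fund_cos a L"
    by (simp add: algebra_simps)
  with pos [of a L] pos [of b L] assms show ?thesis
    unfolding dtn_neumann_def by (intro divide_less_divide_cross) auto
qed

lemma dtn_dirichlet_le_neg:
  assumes "0 < L" "lam < 0"
  shows "dtn_dirichlet L lam \<le> - sqrt (- lam)"
proof -
  define r where "r = sqrt (- lam)"
  have "0 < sinh (r * L)" using assms by (simp add: r_def)
  then have "1 \<le> cosh (r * L) / sinh (r * L)" by (simp add: le_divide_eq sinh_le_cosh_real)
  then have "r * 1 \<le> r * (cosh (r * L) / sinh (r * L))"
    by (rule mult_left_mono) (use assms in \<open>simp add: r_def\<close>)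
  moreover have "dtn_dirichlet L lam = - (r * (cosh (r * L) / sinh (r * L)))"
    using assms by (simp add: dtn_dirichlet_def fund_cos_def fund_sin_def r_def)
  ultimately show ?thesis by (simp add: r_def)
qed

lemma dtn_dirichlet_unbounded:
  assumes "0 < L"
  shows "\<exists>lam\<in>{0<..<(pi / L)\<^sup>2}. M \<le> dtn_dirichlet L lam"
proof -
  have "sqrt ((pi / L)\<^sup>2) * L = pi" using assms by simp
  then have "fund_cos ((pi / L)\<^sup>2) L = -1" "fund_sin ((pi / L)\<^sup>2) L = 0"
    using assms by (simp_all add: fund_cos_def fund_sin_def)
  then have "\<exists>lam\<in>{0<..<(pi / L)\<^sup>2}. M \<le> - fund_cos lam L / fund_sin lam L"
    using assms
    by (intro exists_quotient_ge_at_left isCont_minus isCont_fund_cos isCont_fund_sin fund_sin_pos)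
      auto
  then show ?thesis by (simp add: dtn_dirichlet_def)
qed

lemma dtn_neumann_unbounded:
  assumes "0 < L"
  shows "\<exists>lam\<in>{0<..<(pi / (2 * L))\<^sup>2}. M \<le> dtn_neumann L lam"
proof -
  have "sqrt ((pi / (2 * L))\<^sup>2) * L = pi / 2" using assms by simp
  then have "fund_cos ((pi / (2 * L))\<^sup>2) L = 0" "0 < fund_sin ((pi / (2 * L))\<^sup>2) L"
    using assms by (simp_all add: fund_cos_def fund_sin_def)
  then have "\<exists>lam\<in>{0<..<(pi / (2 * L))\<^sup>2}. M \<le> lam * fund_sin lam L / fund_cos lam L"
    using assms
    by (intro exists_quotient_ge_at_left isCont_mult isCont_fund_cos isCont_fund_sin fund_cos_pos
        continuous_intros) auto
  then show ?thesis by (simp add: dtn_neumann_def)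
qed

lemma isCont_dtn_dirichlet:
  "0 < L \<Longrightarrow> lam < (pi / L)\<^sup>2 \<Longrightarrow> isCont (dtn_dirichlet L) lam"
  unfolding dtn_dirichlet_def [abs_def] using fund_sin_pos [of L lam]
  by (intro isCont_divide isCont_minus isCont_fund_cos isCont_fund_sin) auto

lemma isCont_dtn_neumann:
  "0 < L \<Longrightarrow> lam < (pi / (2 * L))\<^sup>2 \<Longrightarrow> isCont (dtn_neumann L) lam"
  unfolding dtn_neumann_def [abs_def] using fund_cos_pos [of L lam]
  by (intro isCont_divide isCont_mult isCont_fund_cos isCont_fund_sin continuous_intros) auto

lemma edge_dirichlet_end:
  assumes f: "eigen_ode L lam f g" and L: "0 < L" "lam < (pi / L)\<^sup>2" and "f L = 0"
  shows "g 0 = dtn_dirichlet L lam * f 0"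
    and "f 0 = 0 \<Longrightarrow> x \<in> {0..L} \<Longrightarrow> f x = 0"
proof -
  have S: "0 < fund_sin lam L" using L by (rule fund_sin_pos)
  have "f 0 * fund_cos lam L + g 0 * fund_sin lam L = 0"
    using eigen_ode_solution (1) [OF f, of L] assms by simp
  with S show g0: "g 0 = dtn_dirichlet L lam * f 0" by (simp add: dtn_dirichlet_def field_simps)
  show "f x = 0" if "f 0 = 0" "x \<in> {0..L}"
    using eigen_ode_zero [OF f] g0 that by simp
qed

lemma edge_dirichlet_start:
  assumes f: "eigen_ode L lam f g" and L: "0 < L" "lam < (pi / L)\<^sup>2" and "f 0 = 0"
  shows "- g L = dtn_dirichlet L lam * f L"
    and "f L = 0 \<Longrightarrow> x \<in> {0..L} \<Longrightarrow> f x = 0"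
proof -
  have S: "0 < fund_sin lam L" using L by (rule fund_sin_pos)
  have fL: "f L = g 0 * fund_sin lam L" and gL: "g L = g 0 * fund_cos lam L"
    using eigen_ode_solution [OF f, of L] assms by simp_all
  show "- g L = dtn_dirichlet L lam * f L" using S by (simp add: fL gL dtn_dirichlet_def)
  show "f x = 0" if "f L = 0" "x \<in> {0..L}"
    using eigen_ode_zero [OF f] fL S that assms(4) by simp
qed

lemma edge_neumann_start:
  assumes f: "eigen_ode L lam f g" and L: "0 < L" "lam < (pi / (2 * L))\<^sup>2" and "g 0 = 0"
  shows "- g L = dtn_neumann L lam * f L"
    and "f L = 0 \<Longrightarrow> x \<in> {0..L} \<Longrightarrow> f x = 0"
proof -
  have C: "0 < fund_cos lam L" using L by (rule fund_cos_pos)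
  have fL: "f L = f 0 * fund_cos lam L" and gL: "g L = - lam * f 0 * fund_sin lam L"
    using eigen_ode_solution [OF f, of L] assms by simp_all
  show "- g L = dtn_neumann L lam * f L" using C by (simp add: fL gL dtn_neumann_def)
  show "f x = 0" if "f L = 0" "x \<in> {0..L}"
    using eigen_ode_zero [OF f] fL C that assms(4) by simp
qed

section \<open>Stars of edges\<close>

locale edge_star =
  fixes E :: "nat set" and l :: "nat \<Rightarrow> real"
  assumes finite_E: "finite E" and E_nonempty: "E \<noteq> {}" and length_pos: "e \<in> E \<Longrightarrow> 0 < l e"
begin

text \<open>\<open>(pi / l e)\<^sup>2\<close> is the lowest Dirichlet eigenvalue of the edge \<open>e\<close>.\<close>
definition threshold :: real where
  "threshold = Min ((\<lambda>e. (pi / l e)\<^sup>2) ` E)"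

definition dtn_sum :: "real \<Rightarrow> real" where
  "dtn_sum lam = (\<Sum>e\<in>E. dtn_dirichlet (l e) lam)"

lemma threshold_le: "e \<in> E \<Longrightarrow> threshold \<le> (pi / l e)\<^sup>2"
  unfolding threshold_def using finite_E by (intro Min_le) auto

lemma threshold_attained: "\<exists>e\<in>E. threshold = (pi / l e)\<^sup>2"
proof -
  have "threshold \<in> (\<lambda>e. (pi / l e)\<^sup>2) ` E"
    unfolding threshold_def using finite_E E_nonempty by (intro Min_in) auto
  then show ?thesis by auto
qed

lemma below_threshold: "e \<in> E \<Longrightarrow> lam < threshold \<Longrightarrow> lam < (pi / l e)\<^sup>2"
  using threshold_le by fastforce

lemma dtn_sum_strict_mono: "a < b \<Longrightarrow> b < threshold \<Longrightarrow> dtn_sum a < dtn_sum b"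
  unfolding dtn_sum_def using finite_E E_nonempty
  by (intro sum_strict_mono dtn_dirichlet_strict_mono length_pos below_threshold) auto

lemma dtn_sum_mono: "a \<le> b \<Longrightarrow> b < threshold \<Longrightarrow> dtn_sum a \<le> dtn_sum b"
  using dtn_sum_strict_mono by (cases "a = b") (auto simp: less_le)

lemma dtn_sum_inj: "a < threshold \<Longrightarrow> b < threshold \<Longrightarrow> dtn_sum a = dtn_sum b \<Longrightarrow> a = b"
  by (cases a b rule: linorder_cases) (auto dest: dtn_sum_strict_mono)

lemma isCont_dtn_sum: "lam < threshold \<Longrightarrow> isCont dtn_sum lam"
  unfolding dtn_sum_def [abs_def]
  by (intro isCont_sum ballI isCont_dtn_dirichlet length_pos below_threshold)

lemma dtn_sum_0_neg: "dtn_sum 0 < 0"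
proof -
  have "0 < (\<Sum>e\<in>E. 1 / l e)" using finite_E E_nonempty length_pos by (intro sum_pos) auto
  then show ?thesis by (simp add: dtn_sum_def dtn_dirichlet_0 sum_negf)
qed

lemma dtn_sum_unbounded_below: "\<exists>lam<0. dtn_sum lam < \<gamma>"
proof -
  define r where "r = \<bar>\<gamma>\<bar> + 1"
  have r: "0 < r" "\<gamma> < r" "- r < \<gamma>" by (auto simp: r_def)
  have "dtn_sum (- r\<^sup>2) \<le> (\<Sum>e\<in>E. - r)"
    unfolding dtn_sum_def using dtn_dirichlet_le_neg [of _ "- r\<^sup>2"] r length_pos
    by (intro sum_mono) auto
  also have "\<dots> \<le> - r"
    using r finite_E E_nonempty by (simp add: card_gt_0_iff Suc_le_eq mult_le_cancel_right1)
  finally show ?thesis using r by (intro exI [of _ "- r\<^sup>2"]) auto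
qed

lemma dtn_sum_unbounded_above: "\<exists>lam\<in>{0<..<threshold}. \<gamma> \<le> dtn_sum lam"
proof -
  obtain e0 where e0: "e0 \<in> E" "threshold = (pi / l e0)\<^sup>2" using threshold_attained by blast
  define R where "R = (\<Sum>e\<in>E - {e0}. dtn_dirichlet (l e) 0)"
  obtain lam where lam: "lam \<in> {0<..<threshold}" "\<gamma> - R \<le> dtn_dirichlet (l e0) lam"
    using dtn_dirichlet_unbounded [OF length_pos [OF e0(1)], of "\<gamma> - R"] unfolding e0(2) by blast
  have "R \<le> (\<Sum>e\<in>E - {e0}. dtn_dirichlet (l e) lam)"
    unfolding R_def using lam
    by (intro sum_mono less_imp_le dtn_dirichlet_strict_mono length_pos below_threshold) auto
  then have "\<gamma> \<le> dtn_dirichlet (l e0) lam + (\<Sum>e\<in>E - {e0}. dtn_dirichlet (l e) lam)"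
    using lam by linarith
  also have "\<dots> = dtn_sum lam"
    unfolding dtn_sum_def using finite_E e0(1) by (rule sum.remove [symmetric])
  finally show ?thesis using lam by blast
qed

lemma dtn_sum_root: "\<exists>r<threshold. dtn_sum r = \<gamma>"
proof -
  obtain a where a: "a < 0" "dtn_sum a < \<gamma>" using dtn_sum_unbounded_below by blast
  obtain b where b: "b \<in> {0<..<threshold}" "\<gamma> \<le> dtn_sum b" using dtn_sum_unbounded_above by blast
  have "continuous_on {a..b} dtn_sum"
    using b by (intro continuous_at_imp_continuous_on ballI isCont_dtn_sum) auto
  then obtain r where "a \<le> r" "r \<le> b" "dtn_sum r = \<gamma>"
    using IVT' [of dtn_sum a \<gamma> b] a b by auto
  with b have "r < threshold \<and> dtn_sum r = \<gamma>" by auto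
  then show ?thesis by blast
qed

lemma dtn_sum_neumann_root:
  assumes L: "0 < L"
  shows "\<exists>r. 0 < r \<and> r < min threshold ((pi / (2 * L))\<^sup>2) \<and> dtn_sum r + dtn_neumann L r = 0"
proof -
  define h where "h lam = dtn_sum lam + dtn_neumann L lam" for lam
  define T where "T = min threshold ((pi / (2 * L))\<^sup>2)"
  have h0: "h 0 < 0" using dtn_sum_0_neg by (simp add: h_def dtn_neumann_0)
  have "\<exists>b\<in>{0<..<T}. 0 \<le> h b"
  proof (cases "threshold \<le> (pi / (2 * L))\<^sup>2")
    case True
    obtain b where b: "b \<in> {0<..<threshold}" "0 \<le> dtn_sum b" using dtn_sum_unbounded_above by blast
    then have "dtn_neumann L 0 < dtn_neumann L b"
      using True L by (intro dtn_neumann_strict_mono) auto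
    with b True show ?thesis by (intro bexI [of _ b]) (auto simp: h_def T_def dtn_neumann_0)
  next
    case False
    obtain b where b: "b \<in> {0<..<(pi / (2 * L))\<^sup>2}" "- dtn_sum 0 \<le> dtn_neumann L b"
      using dtn_neumann_unbounded [OF L] by blast
    then have "dtn_sum 0 \<le> dtn_sum b" using False by (intro dtn_sum_mono) auto
    with b False show ?thesis by (intro bexI [of _ b]) (auto simp: h_def T_def)
  qed
  then obtain b where b: "b \<in> {0<..<T}" "0 \<le> h b" by blast
  have "continuous_on {0..b} h"
    unfolding h_def [abs_def] using b L
    by (intro continuous_at_imp_continuous_on ballI isCont_add isCont_dtn_sum isCont_dtn_neumann)
      (auto simp: T_def)
  then obtain r where "0 \<le> r" "r \<le> b" "h r = 0"
    using IVT' [of h 0 0 b] h0 b by auto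
  with h0 b show ?thesis by (auto simp: h_def T_def less_le)
qed

lemma dtn_sum_neumann_inj:
  assumes "0 < L" "a < min threshold ((pi / (2 * L))\<^sup>2)" "b < min threshold ((pi / (2 * L))\<^sup>2)"
    and "dtn_sum a + dtn_neumann L a = dtn_sum b + dtn_neumann L b"
  shows "a = b"
proof (cases a b rule: linorder_cases)
  case less
  with assms have "dtn_sum a < dtn_sum b" "dtn_neumann L a < dtn_neumann L b"
    by (auto intro: dtn_sum_strict_mono dtn_neumann_strict_mono)
  with assms(4) show ?thesis by simp
next
  case greater
  with assms have "dtn_sum b < dtn_sum a" "dtn_neumann L b < dtn_neumann L a"
    by (auto intro: dtn_sum_strict_mono dtn_neumann_strict_mono)
  with assms(4) show ?thesis by simp
qed

lemma star_dirichlet_end: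
  assumes "\<forall>e\<in>E. eigen_ode (l e) lam (f e) (g e)" "lam < threshold"
    and "\<forall>e\<in>E. f e 0 = c" "\<forall>e\<in>E. f e (l e) = 0"
  shows "(\<Sum>e\<in>E. g e 0) = dtn_sum lam * c"
    and "c = 0 \<Longrightarrow> e \<in> E \<Longrightarrow> x \<in> {0..l e} \<Longrightarrow> f e x = 0"
proof -
  have edge: "e \<in> E \<Longrightarrow> eigen_ode (l e) lam (f e) (g e) \<and> 0 < l e \<and> lam < (pi / l e)\<^sup>2"
    for e using assms(1,2) length_pos below_threshold by blast
  have "(\<Sum>e\<in>E. g e 0) = (\<Sum>e\<in>E. dtn_dirichlet (l e) lam * c)"
    using edge assms(3,4) edge_dirichlet_end (1) by (intro sum.cong) auto
  then show "(\<Sum>e\<in>E. g e 0) = dtn_sum lam * c" by (simp add: dtn_sum_def sum_distrib_right)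
  show "f e x = 0" if "c = 0" "e \<in> E" "x \<in> {0..l e}"
    using edge [OF that(2)] assms(3,4) that edge_dirichlet_end (2) by blast
qed

lemma star_dirichlet_start:
  assumes "\<forall>e\<in>E. eigen_ode (l e) lam (f e) (g e)" "lam < threshold"
    and "\<forall>e\<in>E. f e 0 = 0" "\<forall>e\<in>E. f e (l e) = c"
  shows "(\<Sum>e\<in>E. - g e (l e)) = dtn_sum lam * c"
    and "c = 0 \<Longrightarrow> e \<in> E \<Longrightarrow> x \<in> {0..l e} \<Longrightarrow> f e x = 0"
proof -
  have edge: "e \<in> E \<Longrightarrow> eigen_ode (l e) lam (f e) (g e) \<and> 0 < l e \<and> lam < (pi / l e)\<^sup>2"
    for e using assms(1,2) length_pos below_threshold by blast
  have "(\<Sum>e\<in>E. - g e (l e)) = (\<Sum>e\<in>E. dtn_dirichlet (l e) lam * c)"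
    using edge assms(3,4) edge_dirichlet_start (1) by (intro sum.cong) auto
  then show "(\<Sum>e\<in>E. - g e (l e)) = dtn_sum lam * c" by (simp add: dtn_sum_def sum_distrib_right)
  show "f e x = 0" if "c = 0" "e \<in> E" "x \<in> {0..l e}"
    using edge [OF that(2)] assms(3,4) that edge_dirichlet_start (2) by blast
qed

end

section \<open>The graphs \<open>Gamma\<^sub>1\<close> and \<open>Gamma\<^sub>2\<close>\<close>

lemma is_eigenvalue_iff:
  "is_eigenvalue G lam \<longleftrightarrow> (\<exists>f g.
     (\<forall>e\<in>edges G. eigen_ode (len G e) lam (f e) (g e)) \<and>
     (\<exists>e\<in>edges G. \<exists>x\<in>{0..len G e}. f e x \<noteq> 0) \<and>
     (\<forall>v. vertex_ok G f g v))"
  by (simp add: is_eigenvalue_def eigen_ode_def)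

lemma is_eigenvalueI:
  assumes "\<And>e. e \<in> edges G \<Longrightarrow> eigen_ode (len G e) lam (f e) (g e)"
    and "e \<in> edges G" "x \<in> {0..len G e}" "f e x \<noteq> 0"
    and "\<And>v. vertex_ok G f g v"
  shows "is_eigenvalue G lam"
  unfolding is_eigenvalue_iff using assms by blast

lemma lambda1_bounds:
  assumes "is_eigenvalue G r" and unique: "\<And>lam. is_eigenvalue G lam \<Longrightarrow> lam < T \<Longrightarrow> lam = r"
  shows "min T r \<le> lambda1 G" "lambda1 G \<le> r"
proof -
  have low: "min T r \<le> lam" if "is_eigenvalue G lam" for lam
    using unique [OF that] by (cases "lam < T") auto
  show "min T r \<le> lambda1 G"
    unfolding lambda1_def using assms(1) low by (intro cInf_greatest) auto
  show "lambda1 G \<le> r"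
    unfolding lambda1_def using assms(1) low by (intro cInf_lower bdd_belowI) auto
qed

lemma dirichlet_at_simps [simp]:
  "edges (dirichlet_at v G) = edges G"
  "len (dirichlet_at v G) = len G"
  "src (dirichlet_at v G) = src G"
  "tgt (dirichlet_at v G) = tgt G"
  "cond (dirichlet_at v G) w = (if w = v then Dirichlet else cond G w)"
  by (simp_all add: dirichlet_at_def)

lemma vals_flux_dirichlet_at [simp]:
  "vals_at (dirichlet_at v G) = vals_at G"
  "flux_at (dirichlet_at v G) = flux_at G"
  by (simp_all add: vals_at_def flux_at_def fun_eq_iff cong: if_cong)

lemma Gamma1_simps [simp]:
  "edges (Gamma1 l gA gB) = {1..4}"
  "len (Gamma1 l gA gB) = l"
  "cond (Gamma1 l gA gB) VA = Delta gA"
  "cond (Gamma1 l gA gB) VB = Delta gB"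
  "cond (Gamma1 l gA gB) VC = Delta 0"
  "vals_at (Gamma1 l gA gB) f VA c \<longleftrightarrow> (\<forall>e\<in>{1..4}. f e 0 = c)"
  "vals_at (Gamma1 l gA gB) f VB c \<longleftrightarrow> (\<forall>e\<in>{1..4}. f e (l e) = c)"
  "vals_at (Gamma1 l gA gB) f VC c"
  "flux_at (Gamma1 l gA gB) g VA = (\<Sum>e\<in>{1..4}. g e 0)"
  "flux_at (Gamma1 l gA gB) g VB = (\<Sum>e\<in>{1..4}. - g e (l e))"
  "flux_at (Gamma1 l gA gB) g VC = 0"
  by (simp_all add: Gamma1_def vals_at_def flux_at_def)

lemma Gamma2_simps [simp]:
  "edges (Gamma2 l) = insert 0 {1..4}"
  "len (Gamma2 l) = l"
  "cond (Gamma2 l) v = Delta 0"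
  "vals_at (Gamma2 l) f VA c \<longleftrightarrow> (\<forall>e\<in>{1..4}. f e 0 = c) \<and> f 0 (l 0) = c"
  "vals_at (Gamma2 l) f VB c \<longleftrightarrow> (\<forall>e\<in>{1..4}. f e (l e) = c)"
  "vals_at (Gamma2 l) f VC c \<longleftrightarrow> f 0 0 = c"
  "flux_at (Gamma2 l) g VA = - g 0 (l 0) + (\<Sum>e\<in>{1..4}. g e 0)"
  "flux_at (Gamma2 l) g VB = (\<Sum>e\<in>{1..4}. - g e (l e))"
  "flux_at (Gamma2 l) g VC = g 0 0"
proof -
  have E: "{0..4::nat} = insert 0 {1..4}" by auto
  show "edges (Gamma2 l) = insert 0 {1..4}" "len (Gamma2 l) = l" "cond (Gamma2 l) v = Delta 0"
    by (simp_all add: Gamma2_def E)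
  show "vals_at (Gamma2 l) f VA c \<longleftrightarrow> (\<forall>e\<in>{1..4}. f e 0 = c) \<and> f 0 (l 0) = c"
    "vals_at (Gamma2 l) f VB c \<longleftrightarrow> (\<forall>e\<in>{1..4}. f e (l e) = c)"
    "vals_at (Gamma2 l) f VC c \<longleftrightarrow> f 0 0 = c"
    by (auto simp: Gamma2_def vals_at_def E)
  show "flux_at (Gamma2 l) g VA = - g 0 (l 0) + (\<Sum>e\<in>{1..4}. g e 0)"
    "flux_at (Gamma2 l) g VB = (\<Sum>e\<in>{1..4}. - g e (l e))"
    "flux_at (Gamma2 l) g VC = g 0 0"
    by (simp_all add: Gamma2_def flux_at_def E)
qed

locale gamma_lengths =
  fixes l :: "nat \<Rightarrow> real"
  assumes lengths_pos: "\<forall>i\<le>4. 0 < l i"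

sublocale gamma_lengths \<subseteq> edge_star "{1..4}" l
  using lengths_pos by unfold_locales auto

context gamma_lengths
begin

lemma is_eigenvalue_Gamma1_B_iff:
  assumes lam: "lam < threshold"
  shows "is_eigenvalue (dirichlet_at VB (Gamma1 l gA gB)) lam \<longleftrightarrow> dtn_sum lam = gA"
proof
  assume "is_eigenvalue (dirichlet_at VB (Gamma1 l gA gB)) lam"
  then obtain f g where ode: "\<forall>e\<in>{1..4}. eigen_ode (l e) lam (f e) (g e)"
    and nonzero: "\<exists>e\<in>{1..4}. \<exists>x\<in>{0..l e}. f e x \<noteq> 0"
    and ok: "\<And>v. vertex_ok (dirichlet_at VB (Gamma1 l gA gB)) f g v"
    by (auto simp: is_eigenvalue_iff)
  obtain c where A: "\<forall>e\<in>{1..4}. f e 0 = c" "(\<Sum>e\<in>{1..4}. g e 0) = gA * c"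
    using ok [of VA] by (auto simp: vertex_ok_def)
  have B: "\<forall>e\<in>{1..4}. f e (l e) = 0"
    using ok [of VB] by (simp add: vertex_ok_def)
  have "c \<noteq> 0" using nonzero star_dirichlet_end (2) [OF ode lam A(1) B] by blast
  with A(2) star_dirichlet_end (1) [OF ode lam A(1) B] show "dtn_sum lam = gA" by simp
next
  assume F: "dtn_sum lam = gA"
  define f where "f e x = fund_cos lam x + dtn_dirichlet (l e) lam * fund_sin lam x" for e x
  define g where "g e x = - lam * fund_sin lam x + dtn_dirichlet (l e) lam * fund_cos lam x" for e x
  have ode: "eigen_ode (l e) lam (f e) (g e)" for e
    using eigen_ode_fund [of "l e" lam 1 "dtn_dirichlet (l e) lam"]
    by (simp add: f_def [abs_def] g_def [abs_def])
  have B: "f e (l e) = 0" if "e \<in> {1..4}" for e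
    using fund_sin_pos [OF length_pos [OF that] below_threshold [OF that lam]]
    by (simp add: f_def dtn_dirichlet_def)
  have A: "(\<Sum>e\<in>{1..4}. g e 0) = gA * 1"
    using F unfolding dtn_sum_def by (simp add: g_def)
  have "vertex_ok (dirichlet_at VB (Gamma1 l gA gB)) f g v" for v
    using A B by (cases v) (auto simp: vertex_ok_def f_def intro!: exI [of _ 1])
  with ode show "is_eigenvalue (dirichlet_at VB (Gamma1 l gA gB)) lam"
    using length_pos [of 1] by (intro is_eigenvalueI [where e = 1 and x = 0]) (auto simp: f_def)
qed

lemma is_eigenvalue_Gamma1_A_iff:
  assumes lam: "lam < threshold"
  shows "is_eigenvalue (dirichlet_at VA (Gamma1 l gA gB)) lam \<longleftrightarrow> dtn_sum lam = gB"
proof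
  assume "is_eigenvalue (dirichlet_at VA (Gamma1 l gA gB)) lam"
  then obtain f g where ode: "\<forall>e\<in>{1..4}. eigen_ode (l e) lam (f e) (g e)"
    and nonzero: "\<exists>e\<in>{1..4}. \<exists>x\<in>{0..l e}. f e x \<noteq> 0"
    and ok: "\<And>v. vertex_ok (dirichlet_at VA (Gamma1 l gA gB)) f g v"
    by (auto simp: is_eigenvalue_iff)
  have A: "\<forall>e\<in>{1..4}. f e 0 = 0"
    using ok [of VA] by (simp add: vertex_ok_def)
  obtain c where B: "\<forall>e\<in>{1..4}. f e (l e) = c" "(\<Sum>e\<in>{1..4}. - g e (l e)) = gB * c"
    using ok [of VB] by (auto simp: vertex_ok_def)
  have "c \<noteq> 0" using nonzero star_dirichlet_start (2) [OF ode lam A B(1)] by blast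
  with B(2) star_dirichlet_start (1) [OF ode lam A B(1)] show "dtn_sum lam = gB" by simp
next
  assume F: "dtn_sum lam = gB"
  define f where "f e x = fund_sin lam x / fund_sin lam (l e)" for e x
  define g where "g e x = fund_cos lam x / fund_sin lam (l e)" for e x
  have ode: "eigen_ode (l e) lam (f e) (g e)" for e
    using eigen_ode_fund [of "l e" lam 0 "1 / fund_sin lam (l e)"]
    by (simp add: f_def [abs_def] g_def [abs_def])
  have pos: "0 < fund_sin lam (l e)" if "e \<in> {1..4}" for e
    using fund_sin_pos [OF length_pos [OF that] below_threshold [OF that lam]] .
  have B: "f e (l e) = 1" if "e \<in> {1..4}" for e
    using pos [OF that] that by (simp add: f_def)
  have flux: "(\<Sum>e\<in>{1..4}. - g e (l e)) = gB * 1"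
    using F unfolding dtn_sum_def by (simp add: g_def dtn_dirichlet_def)
  have "vertex_ok (dirichlet_at VA (Gamma1 l gA gB)) f g v" for v
    using B flux by (cases v) (auto simp: vertex_ok_def f_def intro!: exI [of _ 1])
  with ode show "is_eigenvalue (dirichlet_at VA (Gamma1 l gA gB)) lam"
    using length_pos [of 1] B [of 1] by (intro is_eigenvalueI [where e = 1 and x = "l 1"]) auto
qed

lemma is_eigenvalue_Gamma2_B_iff:
  assumes lam: "lam < min threshold ((pi / (2 * l 0))\<^sup>2)"
  shows "is_eigenvalue (dirichlet_at VB (Gamma2 l)) lam \<longleftrightarrow>
    dtn_sum lam + dtn_neumann (l 0) lam = 0"
proof -
  have l0: "0 < l 0" using lengths_pos by simp
  have lam_T: "lam < threshold" and lam_0: "lam < (pi / (2 * l 0))\<^sup>2" using lam by auto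
  show ?thesis
  proof
    assume "is_eigenvalue (dirichlet_at VB (Gamma2 l)) lam"
    then obtain f g where ode0: "eigen_ode (l 0) lam (f 0) (g 0)"
      and ode_star: "\<forall>e\<in>{1..4}. eigen_ode (l e) lam (f e) (g e)"
      and nonzero: "(\<exists>x\<in>{0..l 0}. f 0 x \<noteq> 0) \<or> (\<exists>e\<in>{1..4}. \<exists>x\<in>{0..l e}. f e x \<noteq> 0)"
      and ok: "\<And>v. vertex_ok (dirichlet_at VB (Gamma2 l)) f g v"
      by (simp add: is_eigenvalue_iff) blast
    obtain c where A: "\<forall>e\<in>{1..4}. f e 0 = c" "f 0 (l 0) = c"
      "- g 0 (l 0) + (\<Sum>e\<in>{1..4}. g e 0) = 0"
      using ok [of VA] by (auto simp: vertex_ok_def)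
    have B: "\<forall>e\<in>{1..4}. f e (l e) = 0"
      using ok [of VB] by (simp add: vertex_ok_def)
    have C: "g 0 0 = 0"
      using ok [of VC] by (auto simp: vertex_ok_def)
    note pendant = edge_neumann_start [OF ode0 l0 lam_0 C]
    note star = star_dirichlet_end [OF ode_star lam_T A(1) B]
    have "c \<noteq> 0"
    proof
      assume "c = 0"
      with nonzero pendant (2) star (2) A(2) show False by auto
    qed
    moreover have "(dtn_sum lam + dtn_neumann (l 0) lam) * c = 0"
      using A(2,3) pendant (1) star (1) by (simp add: algebra_simps)
    ultimately show "dtn_sum lam + dtn_neumann (l 0) lam = 0" by simp
  next
    assume H: "dtn_sum lam + dtn_neumann (l 0) lam = 0"
    define f where "f e x = (if e = 0 then fund_cos lam x / fund_cos lam (l 0)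
      else fund_cos lam x + dtn_dirichlet (l e) lam * fund_sin lam x)" for e x
    define g where "g e x = (if e = 0 then - lam * fund_sin lam x / fund_cos lam (l 0)
      else - lam * fund_sin lam x + dtn_dirichlet (l e) lam * fund_cos lam x)" for e x
    have ode: "eigen_ode (l e) lam (f e) (g e)" for e
    proof (cases "e = 0")
      case True
      then show ?thesis
        using eigen_ode_fund [of "l 0" lam "1 / fund_cos lam (l 0)" 0]
        by (simp add: f_def [abs_def] g_def [abs_def])
    next
      case False
      then show ?thesis
        using eigen_ode_fund [of "l e" lam 1 "dtn_dirichlet (l e) lam"]
        by (simp add: f_def [abs_def] g_def [abs_def])
    qed
    have C: "0 < fund_cos lam (l 0)" using l0 lam_0 by (rule fund_cos_pos)
    have B: "f e (l e) = 0" if "e \<in> {1..4}" for e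
      using fund_sin_pos [OF length_pos [OF that] below_threshold [OF that lam_T]] that
      by (simp add: f_def dtn_dirichlet_def)
    have "(\<Sum>e\<in>{1..4}. g e 0) = dtn_sum lam"
      unfolding dtn_sum_def by (rule sum.cong) (auto simp: g_def)
    then have A: "- g 0 (l 0) + (\<Sum>e\<in>{1..4}. g e 0) = 0 * 1"
      using H by (simp add: g_def dtn_neumann_def)
    have "vertex_ok (dirichlet_at VB (Gamma2 l)) f g v" for v
      using A B C by (cases v) (auto simp: vertex_ok_def f_def g_def intro!: exI [of _ 1])
    with ode show "is_eigenvalue (dirichlet_at VB (Gamma2 l)) lam"
      using length_pos [of 1] by (intro is_eigenvalueI [where e = 1 and x = 0]) (auto simp: f_def)
  qed
qed

lemma is_eigenvalue_Gamma2_AI: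
  assumes lam: "lam < threshold" and F: "dtn_sum lam = 0"
  shows "is_eigenvalue (dirichlet_at VA (Gamma2 l)) lam"
proof -
  define f where "f e x = (if e = 0 then 0 else fund_sin lam x / fund_sin lam (l e))" for e x
  define g where "g e x = (if e = 0 then 0 else fund_cos lam x / fund_sin lam (l e))" for e x
  have ode: "eigen_ode (l e) lam (f e) (g e)" for e
  proof (cases "e = 0")
    case True
    then show ?thesis
      using eigen_ode_fund [of "l 0" lam 0 0] by (simp add: f_def [abs_def] g_def [abs_def])
  next
    case False
    then show ?thesis
      using eigen_ode_fund [of "l e" lam 0 "1 / fund_sin lam (l e)"]
      by (simp add: f_def [abs_def] g_def [abs_def])
  qed
  have pos: "0 < fund_sin lam (l e)" if "e \<in> {1..4}" for e
    using fund_sin_pos [OF length_pos [OF that] below_threshold [OF that lam]] .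
  have B: "f e (l e) = 1" if "e \<in> {1..4}" for e
    using pos [OF that] that by (simp add: f_def)
  have "(\<Sum>e\<in>{1..4}. - g e (l e)) = dtn_sum lam"
    unfolding dtn_sum_def by (rule sum.cong) (auto simp: g_def dtn_dirichlet_def)
  with F have flux: "(\<Sum>e\<in>{1..4}. - g e (l e)) = 0 * 1" by simp
  have "vertex_ok (dirichlet_at VA (Gamma2 l)) f g v" for v
    using B flux by (cases v) (auto simp: vertex_ok_def f_def g_def intro!: exI [of _ 1])
  with ode show ?thesis
    using length_pos [of 1] B [of 1] by (intro is_eigenvalueI [where e = 1 and x = "l 1"]) auto
qed

lemma is_eigenvalue_Gamma2_AD:
  assumes "is_eigenvalue (dirichlet_at VA (Gamma2 l)) lam"
    and lam: "lam < min threshold ((pi / (2 * l 0))\<^sup>2)"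
  shows "dtn_sum lam = 0"
proof -
  have l0: "0 < l 0" using lengths_pos by simp
  have lam_T: "lam < threshold" and lam_0: "lam < (pi / (2 * l 0))\<^sup>2" using lam by auto
  obtain f g where ode0: "eigen_ode (l 0) lam (f 0) (g 0)"
    and ode_star: "\<forall>e\<in>{1..4}. eigen_ode (l e) lam (f e) (g e)"
    and nonzero: "(\<exists>x\<in>{0..l 0}. f 0 x \<noteq> 0) \<or> (\<exists>e\<in>{1..4}. \<exists>x\<in>{0..l e}. f e x \<noteq> 0)"
    and ok: "\<And>v. vertex_ok (dirichlet_at VA (Gamma2 l)) f g v"
    using assms(1) by (simp add: is_eigenvalue_iff) blast
  have A: "\<forall>e\<in>{1..4}. f e 0 = 0" "f 0 (l 0) = 0"
    using ok [of VA] by (simp_all add: vertex_ok_def)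
  obtain c where B: "\<forall>e\<in>{1..4}. f e (l e) = c" "(\<Sum>e\<in>{1..4}. - g e (l e)) = 0"
    using ok [of VB] by (auto simp: vertex_ok_def)
  have C: "g 0 0 = 0"
    using ok [of VC] by (auto simp: vertex_ok_def)
  note star = star_dirichlet_start [OF ode_star lam_T A(1) B(1)]
  have "\<forall>x\<in>{0..l 0}. f 0 x = 0"
    using edge_neumann_start (2) [OF ode0 l0 lam_0 C] A(2) by auto
  then have "c \<noteq> 0" using nonzero star (2) by auto
  with B(2) star (1) show ?thesis by simp
qed

lemma lambda1_Gamma1_less:
  assumes "gA < gB"
  shows "lambda1 (dirichlet_at VB (Gamma1 l gA gB)) < lambda1 (dirichlet_at VA (Gamma1 l gA gB))"
proof -
  obtain mu where mu: "mu < threshold" "dtn_sum mu = gA" using dtn_sum_root by blast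
  obtain nu where nu: "nu < threshold" "dtn_sum nu = gB" using dtn_sum_root by blast
  have "mu < nu"
  proof (rule ccontr)
    assume "\<not> mu < nu"
    then have "dtn_sum nu \<le> dtn_sum mu" using mu(1) by (intro dtn_sum_mono) auto
    with mu(2) nu(2) assms show False by simp
  qed
  have "lambda1 (dirichlet_at VB (Gamma1 l gA gB)) \<le> mu"
  proof (rule lambda1_bounds (2) [where T = threshold])
    show "is_eigenvalue (dirichlet_at VB (Gamma1 l gA gB)) mu"
      using mu by (simp add: is_eigenvalue_Gamma1_B_iff)
    fix lam assume lam: "is_eigenvalue (dirichlet_at VB (Gamma1 l gA gB)) lam" "lam < threshold"
    then have "dtn_sum lam = dtn_sum mu" using mu by (simp add: is_eigenvalue_Gamma1_B_iff)
    then show "lam = mu" by (rule dtn_sum_inj [OF lam(2) mu(1)])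
  qed
  moreover have "min threshold nu \<le> lambda1 (dirichlet_at VA (Gamma1 l gA gB))"
  proof (rule lambda1_bounds (1))
    show "is_eigenvalue (dirichlet_at VA (Gamma1 l gA gB)) nu"
      using nu by (simp add: is_eigenvalue_Gamma1_A_iff)
    fix lam assume lam: "is_eigenvalue (dirichlet_at VA (Gamma1 l gA gB)) lam" "lam < threshold"
    then have "dtn_sum lam = dtn_sum nu" using nu by (simp add: is_eigenvalue_Gamma1_A_iff)
    then show "lam = nu" by (rule dtn_sum_inj [OF lam(2) nu(1)])
  qed
  ultimately show ?thesis using \<open>mu < nu\<close> nu(1) by linarith
qed

lemma lambda1_Gamma2_less:
  "lambda1 (dirichlet_at VB (Gamma2 l)) < lambda1 (dirichlet_at VA (Gamma2 l))"
proof -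
  define T where "T = min threshold ((pi / (2 * l 0))\<^sup>2)"
  have l0: "0 < l 0" using lengths_pos by simp
  obtain mu where mu: "0 < mu" "mu < T" "dtn_sum mu + dtn_neumann (l 0) mu = 0"
    using dtn_sum_neumann_root [OF l0] unfolding T_def by blast
  obtain nu where nu: "nu < threshold" "dtn_sum nu = 0" using dtn_sum_root by blast
  have "dtn_neumann (l 0) 0 < dtn_neumann (l 0) mu"
    using mu l0 by (intro dtn_neumann_strict_mono) (auto simp: T_def)
  then have "dtn_sum mu < dtn_sum nu" using mu(3) nu(2) by (simp add: dtn_neumann_0)
  have "mu < nu"
  proof (rule ccontr)
    assume "\<not> mu < nu"
    then have "dtn_sum nu \<le> dtn_sum mu" using mu(2) by (intro dtn_sum_mono) (auto simp: T_def)
    with \<open>dtn_sum mu < dtn_sum nu\<close> show False by simp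
  qed
  have "lambda1 (dirichlet_at VB (Gamma2 l)) \<le> mu"
  proof (rule lambda1_bounds (2) [where T = T])
    show "is_eigenvalue (dirichlet_at VB (Gamma2 l)) mu"
      using mu unfolding T_def by (simp add: is_eigenvalue_Gamma2_B_iff)
    fix lam assume lam: "is_eigenvalue (dirichlet_at VB (Gamma2 l)) lam" "lam < T"
    then have "dtn_sum lam + dtn_neumann (l 0) lam = dtn_sum mu + dtn_neumann (l 0) mu"
      using mu unfolding T_def by (simp add: is_eigenvalue_Gamma2_B_iff)
    then show "lam = mu"
      using dtn_sum_neumann_inj [OF l0 lam(2) [unfolded T_def] mu(2) [unfolded T_def]] by blast
  qed
  moreover have "min T nu \<le> lambda1 (dirichlet_at VA (Gamma2 l))"
  proof (rule lambda1_bounds (1))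
    show "is_eigenvalue (dirichlet_at VA (Gamma2 l)) nu" using nu by (rule is_eigenvalue_Gamma2_AI)
    fix lam assume lam: "is_eigenvalue (dirichlet_at VA (Gamma2 l)) lam" "lam < T"
    then have "dtn_sum lam = dtn_sum nu"
      using is_eigenvalue_Gamma2_AD [OF lam(1) lam(2) [unfolded T_def]] nu(2) by simp
    moreover have "lam < threshold" using lam(2) by (simp add: T_def)
    ultimately show "lam = nu" using dtn_sum_inj nu(1) by blast
  qed
  ultimately show ?thesis using \<open>mu < nu\<close> mu(2) by linarith
qed

end

theorem lemma4p1:
  fixes l :: "nat \<Rightarrow> real" and gA gB :: real and G :: qgraph
  assumes "\<forall>i\<le>4. l i > 0"
    and "(G = Gamma1 l gA gB \<and> gA < gB) \<or> G = Gamma2 l"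
  shows "lambda1 (dirichlet_at VB G) < lambda1 (dirichlet_at VA G)"
proof -
  interpret gamma_lengths l using assms(1) by unfold_locales
  from assms(2) show ?thesis using lambda1_Gamma1_less lambda1_Gamma2_less by auto
qed

end
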